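(* If a topological dynamical system $(X,T)$ is an almost one-to-one extension of a minimal equicontinuous system $(Y,S)$ (i.e. there is an almost one-to-one factor map $\pi:(X,T)\to(Y,S)$), then $(X,T)$ is syndetically equicontinuous, i.e. $\mathrm{Eq}_{\mathrm{syn}}(X,T)=X$.
   Context: Systems: compact metric $(X,\varrho)$ with continuous surjection $T$. Factor map: continuous surjection $\pi$ with $\pi\circ T=S\circ\pi$; almost one-to-one: $\{y:\pi^{-1}(y)\text{ is a singleton}\}$ is dense in $Y$. Equicontinuous: the family $\{S^n\}_{n\ge0}$ is equicontinuous. $S_T(U,\delta)=\{n\in\mathbb{N}:\exists x_1,x_2\in U,\ \varrho(T^nx_1,T^nx_2)>\delta\}$, $J_T(U,\delta)=\mathbb N\setminus S_T(U,\delta)$. $x\in\mathrm{Eq}_{\mathrm{syn}}(X,T)$ iff for every $\varepsilon>0$ some neighborhood $U$ of $x$ has $J_T(U,\varepsilon)$ syndetic (bounded gaps). *)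

theory Defs
  imports "HOL-Analysis.Analysis"
begin

definition tds :: "'a::metric_space set \<Rightarrow> ('a \<Rightarrow> 'a) \<Rightarrow> bool" where
  "tds X T \<longleftrightarrow> compact X \<and> continuous_on X T \<and> T ` X = X"

definition factor_map :: "'a::metric_space set \<Rightarrow> ('a \<Rightarrow> 'a) \<Rightarrow> 'b::metric_space set
    \<Rightarrow> ('b \<Rightarrow> 'b) \<Rightarrow> ('a \<Rightarrow> 'b) \<Rightarrow> bool" where
  "factor_map X T Y S \<pi> \<longleftrightarrow> continuous_on X \<pi> \<and> \<pi> ` X = Y \<and> (\<forall>x\<in>X. \<pi> (T x) = S (\<pi> x))"

definition almost_one_to_one :: "'a set \<Rightarrow> 'b::topological_space set \<Rightarrow> ('a \<Rightarrow> 'b) \<Rightarrow> bool" where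
  "almost_one_to_one X Y \<pi> \<longleftrightarrow> Y \<subseteq> closure {y \<in> Y. \<exists>!x. x \<in> X \<and> \<pi> x = y}"

definition minimal_sys :: "'b::metric_space set \<Rightarrow> ('b \<Rightarrow> 'b) \<Rightarrow> bool" where
  "minimal_sys Y S \<longleftrightarrow> (\<forall>Z. Z \<subseteq> Y \<and> closed Z \<and> Z \<noteq> {} \<and> S ` Z \<subseteq> Z \<longrightarrow> Z = Y)"

definition equicontinuous_sys :: "'b::metric_space set \<Rightarrow> ('b \<Rightarrow> 'b) \<Rightarrow> bool" where
  "equicontinuous_sys Y S \<longleftrightarrow>
     (\<forall>y\<in>Y. \<forall>e>0. \<exists>d>0. \<forall>y'\<in>Y. dist y y' < d \<longrightarrow> (\<forall>n. dist ((S^^n) y) ((S^^n) y') < e))"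

definition S_set :: "('a \<Rightarrow> 'a) \<Rightarrow> 'a::metric_space set \<Rightarrow> real \<Rightarrow> nat set" where
  "S_set T U \<delta> = {n. \<exists>x1\<in>U. \<exists>x2\<in>U. dist ((T^^n) x1) ((T^^n) x2) > \<delta>}"

definition J_set :: "('a \<Rightarrow> 'a) \<Rightarrow> 'a::metric_space set \<Rightarrow> real \<Rightarrow> nat set" where
  "J_set T U \<delta> = UNIV - S_set T U \<delta>"

definition syndetic :: "nat set \<Rightarrow> bool" where
  "syndetic A \<longleftrightarrow> (\<exists>L>0. \<forall>m. \<exists>n\<in>A. m \<le> n \<and> n < m + L)"

definition Eq_syn :: "'a::metric_space set \<Rightarrow> ('a \<Rightarrow> 'a) \<Rightarrow> 'a set" where
  "Eq_syn X T = {x \<in> X. \<forall>e>0. \<exists>U. openin (top_of_set X) U \<and> x \<in> U \<and> syndetic (J_set T U e)}"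

end

theory Submission
  imports Defs
begin

text \<open>Pick a point \<open>x\<^sub>0\<close> whose fibre is a singleton. By compactness, points of \<open>X\<close>
mapped close to \<open>\<pi> x\<^sub>0\<close> are themselves close to \<open>x\<^sub>0\<close>. Given \<open>x\<close>, equicontinuity of \<open>S\<close>
yields a neighbourhood \<open>U\<close> of \<open>x\<close> whose image under \<open>S\<^sup>n \<circ> \<pi>\<close> stays close to the orbit of
\<open>\<pi> x\<close>, and by minimality this orbit visits every neighbourhood of \<open>\<pi> x\<^sub>0\<close> along a
syndetic set of times. At those times \<open>T\<^sup>n U\<close> lies near \<open>x\<^sub>0\<close>, hence has small diameter.\<close>

lemma funpow_in_invariant:
  assumes "S ` Y \<subseteq> Y" "y \<in> Y" shows "(S^^n) y \<in> Y"
  using assms by (induction n) auto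

lemma continuous_on_funpow:
  assumes "continuous_on Y S" "S ` Y \<subseteq> Y" shows "continuous_on Y (S^^n)"
proof (induction n)
  case 0 then show ?case by (simp add: continuous_on_id)
next
  case (Suc n)
  have "(S^^n) ` Y \<subseteq> Y" using funpow_in_invariant[OF assms(2)] by auto
  then have "continuous_on ((S^^n) ` Y) S" using assms(1) continuous_on_subset by blast
  then show ?case using Suc continuous_on_compose by (metis funpow.simps(2))
qed

lemma semiconj_funpow:
  assumes "T ` X \<subseteq> X" "\<forall>x\<in>X. \<pi> (T x) = S (\<pi> x)" "x \<in> X"
  shows "\<pi> ((T^^n) x) = (S^^n) (\<pi> x)"
proof (induction n)
  case 0 then show ?case by simp
next
  case (Suc n)
  have "(T^^n) x \<in> X" using funpow_in_invariant[OF assms(1,3)] .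
  then show ?case using Suc assms(2) by simp
qed

lemma syndetic_mono: "syndetic A \<Longrightarrow> A \<subseteq> B \<Longrightarrow> syndetic B"
  unfolding syndetic_def by blast

lemma minimal_sys_orbit_enters_open:
  fixes Y :: "'b::metric_space set"
  assumes "closed Y" and cont: "continuous_on Y S" and SY: "S ` Y \<subseteq> Y" and "minimal_sys Y S"
    and "open V" "V \<inter> Y \<noteq> {}" "y \<in> Y"
  shows "\<exists>k. (S^^k) y \<in> V"
proof -
  define Z where "Z = (\<Inter>k. Y \<inter> (S^^k) -` (- V))"
  have "closed Z"
    unfolding Z_def using continuous_on_funpow[OF cont SY] \<open>closed Y\<close> \<open>open V\<close>
    by (intro closed_INT ballI continuous_closed_preimage) auto
  moreover have "S ` Z \<subseteq> Z"
    using SY by (auto simp: Z_def funpow_swap1[symmetric]) (metis funpow.simps(2) o_apply)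
  moreover have "Z \<subseteq> Y" by (auto simp: Z_def)
  moreover obtain v where "v \<in> V" "v \<in> Y" using \<open>V \<inter> Y \<noteq> {}\<close> by blast
  then have "Z \<noteq> Y" using funpow_0[of S v] unfolding Z_def by blast
  ultimately have "Z = {}"
    using \<open>minimal_sys Y S\<close> unfolding minimal_sys_def by blast
  then show ?thesis using \<open>y \<in> Y\<close> by (auto simp: Z_def)
qed

lemma minimal_sys_return_times_syndetic:
  fixes Y :: "'b::metric_space set"
  assumes "compact Y" and cont: "continuous_on Y S" and SY: "S ` Y \<subseteq> Y" and "minimal_sys Y S"
    and "open V" "V \<inter> Y \<noteq> {}" "y \<in> Y"
  shows "syndetic {n. (S^^n) y \<in> V}"
proof -
  define W where "W k = Y \<inter> (S^^k) -` V" for k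
  have "openin (top_of_set Y) (W k)" for k
    unfolding W_def using continuous_on_funpow[OF cont SY] \<open>open V\<close>
    by (rule continuous_openin_preimage_gen)
  moreover have "Y \<subseteq> \<Union> (range W)"
    using minimal_sys_orbit_enters_open[OF compact_imp_closed[OF \<open>compact Y\<close>] cont SY assms(4-6)]
    by (auto simp: W_def)
  ultimately obtain D where "D \<subseteq> range W" "finite D" "Y \<subseteq> \<Union> D"
    using \<open>compact Y\<close> unfolding compact_eq_openin_cover by (metis rangeE)
  then obtain K where "finite K" and cover: "Y \<subseteq> (\<Union>k\<in>K. W k)"
    by (metis finite_subset_image subset_UNIV)
  then obtain N where N: "K \<subseteq> {..<N}"
    using finite_nat_iff_bounded by blast
  have "\<exists>n. (S^^n) y \<in> V \<and> m \<le> n \<and> n < m + N" for m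
  proof -
    obtain k where "k \<in> K" "(S^^m) y \<in> W k"
      using cover funpow_in_invariant[OF SY \<open>y \<in> Y\<close>] by blast
    then have "(S^^(k + m)) y \<in> V" "k < N"
      using N by (auto simp: W_def funpow_add)
    then show ?thesis by (intro exI[of _ "k + m"]) simp
  qed
  moreover from this[of 0] have "N > 0" by auto
  ultimately show ?thesis
    unfolding syndetic_def by auto
qed

lemma singleton_fibre_imp_close:
  fixes X :: "'a::metric_space set" and \<pi> :: "'a \<Rightarrow> 'b::metric_space"
  assumes "compact X" "continuous_on X \<pi>" "x0 \<in> X" "\<forall>x\<in>X. \<pi> x = \<pi> x0 \<longrightarrow> x = x0" "e > 0"
  obtains \<delta> where "\<delta> > 0" "\<forall>x\<in>X. dist (\<pi> x) (\<pi> x0) < \<delta> \<longrightarrow> dist x x0 < e"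
proof -
  define K where "K = X \<inter> - ball x0 e"
  have "compact K" unfolding K_def using assms(1) by (intro compact_Int_closed) auto
  then have "compact (\<pi> ` K)"
    using assms(2) by (intro compact_continuous_image) (auto intro: continuous_on_subset simp: K_def)
  moreover have "\<pi> x0 \<notin> \<pi> ` K" using assms(4,5) K_def by auto
  ultimately obtain \<delta> where "\<delta> > 0" "ball (\<pi> x0) \<delta> \<subseteq> - (\<pi> ` K)"
    using open_contains_ball compact_imp_closed by (metis open_Compl ComplI)
  moreover have "dist x x0 < e" if "x \<in> X" "dist (\<pi> x) (\<pi> x0) < \<delta>" for x
  proof -
    have "\<pi> x \<in> ball (\<pi> x0) \<delta>" using that(2) by (simp add: dist_commute)
    then have "\<pi> x \<notin> \<pi> ` K" using \<open>ball (\<pi> x0) \<delta> \<subseteq> - (\<pi> ` K)\<close> by blast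
    then show ?thesis using that(1) by (auto simp: K_def dist_commute)
  qed
  ultimately show ?thesis using that by blast
qed

lemma almost_one_to_one_obtain_singleton_fibre:
  assumes "almost_one_to_one X Y \<pi>" "Y \<noteq> {}"
  obtains x0 where "x0 \<in> X" "\<forall>x\<in>X. \<pi> x = \<pi> x0 \<longrightarrow> x = x0"
proof -
  have "{y \<in> Y. \<exists>!x. x \<in> X \<and> \<pi> x = y} \<noteq> {}"
    using assms unfolding almost_one_to_one_def by (metis closure_empty subset_empty)
  then show ?thesis using that by blast
qed

lemma return_times_subset_J_set:
  assumes "T ` X \<subseteq> X" "\<forall>x\<in>X. \<pi> (T x) = S (\<pi> x)" "U \<subseteq> X"
    and fibre: "\<forall>x\<in>X. dist (\<pi> x) c < \<delta> \<longrightarrow> dist x x0 < e/2"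
    and shadow: "\<forall>z\<in>U. \<forall>n. dist ((S^^n) y) ((S^^n) (\<pi> z)) < \<delta>/2"
  shows "{n. (S^^n) y \<in> ball c (\<delta>/2)} \<subseteq> J_set T U e"
proof
  fix n assume "n \<in> {n. (S^^n) y \<in> ball c (\<delta>/2)}"
  then have return: "dist ((S^^n) y) c < \<delta>/2" by (simp add: dist_commute)
  have near: "dist ((T^^n) z) x0 < e/2" if "z \<in> U" for z
  proof -
    have "z \<in> X" using that assms(3) by blast
    have "dist ((S^^n) (\<pi> z)) c < \<delta>"
      using return shadow that by (blast intro: dist_triangle_half_r)
    then show ?thesis
      using fibre funpow_in_invariant[OF assms(1) \<open>z \<in> X\<close>] semiconj_funpow[OF assms(1,2) \<open>z \<in> X\<close>]
      by auto
  qed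
  have "dist ((T^^n) x1) ((T^^n) x2) < e" if "x1 \<in> U" "x2 \<in> U" for x1 x2
    using near[OF that(1)] near[OF that(2)] by (rule dist_triangle_half_l)
  then show "n \<in> J_set T U e"
    unfolding J_set_def S_set_def by (auto simp: not_less intro: less_imp_le)
qed

theorem proposition4p2:
  fixes X :: "'a::metric_space set" and T :: "'a \<Rightarrow> 'a"
    and Y :: "'b::metric_space set" and S :: "'b \<Rightarrow> 'b" and \<pi> :: "'a \<Rightarrow> 'b"
  assumes "tds X T" and "tds Y S"
    and "minimal_sys Y S" and "equicontinuous_sys Y S"
    and "factor_map X T Y S \<pi>" and "almost_one_to_one X Y \<pi>"
  shows "Eq_syn X T = X"
proof -
  have "compact X" and TX: "T ` X \<subseteq> X" using assms(1) unfolding tds_def by auto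
  have Y: "compact Y" "continuous_on Y S" "S ` Y \<subseteq> Y" using assms(2) unfolding tds_def by auto
  have cont: "continuous_on X \<pi>" and XY: "\<pi> ` X = Y" and comm: "\<forall>x\<in>X. \<pi> (T x) = S (\<pi> x)"
    using assms(5) unfolding factor_map_def by auto
  have "\<exists>U. openin (top_of_set X) U \<and> x \<in> U \<and> syndetic (J_set T U e)"
    if "x \<in> X" "e > 0" for x e
  proof -
    obtain x0 where x0: "x0 \<in> X" "\<forall>z\<in>X. \<pi> z = \<pi> x0 \<longrightarrow> z = x0"
      using almost_one_to_one_obtain_singleton_fibre[OF assms(6)] XY \<open>x \<in> X\<close> by blast
    obtain \<delta> where \<delta>: "\<delta> > 0" "\<forall>z\<in>X. dist (\<pi> z) (\<pi> x0) < \<delta> \<longrightarrow> dist z x0 < e/2"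
      using singleton_fibre_imp_close[OF \<open>compact X\<close> cont x0, of "e/2"] \<open>e > 0\<close> by auto
    obtain d where "d > 0"
      and d: "\<forall>y\<in>Y. dist (\<pi> x) y < d \<longrightarrow> (\<forall>n. dist ((S^^n) (\<pi> x)) ((S^^n) y) < \<delta>/2)"
      using assms(4) \<open>x \<in> X\<close> XY \<delta>(1) unfolding equicontinuous_sys_def by (meson half_gt_zero imageI)
    define U where "U = X \<inter> \<pi> -` ball (\<pi> x) d"
    have "\<pi> x0 \<in> ball (\<pi> x0) (\<delta>/2) \<inter> Y" using \<open>\<delta> > 0\<close> x0(1) XY by auto
    then have "syndetic {n. (S^^n) (\<pi> x) \<in> ball (\<pi> x0) (\<delta>/2)}"
      using \<open>x \<in> X\<close> XY by (intro minimal_sys_return_times_syndetic[OF Y assms(3)] open_ball) blast+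
    moreover have "{n. (S^^n) (\<pi> x) \<in> ball (\<pi> x0) (\<delta>/2)} \<subseteq> J_set T U e"
      using d XY by (intro return_times_subset_J_set[OF TX comm _ \<delta>(2)]) (auto simp: U_def)
    moreover have "openin (top_of_set X) U"
      unfolding U_def using cont by (intro continuous_openin_preimage_gen) auto
    ultimately show ?thesis
      using syndetic_mono \<open>x \<in> X\<close> \<open>d > 0\<close> by (auto simp: U_def)
  qed
  then show ?thesis unfolding Eq_syn_def by auto
qed

end
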